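(* Let $(S,\mu)$ be a complete positive measure space, let $X$ be a real Banach space whose norm is Fréchet differentiable, and let $f\in L^1(\mu,X)$ be non-zero. If $f$ is a right symmetric point of $L^1(\mu,X)$, then $Z(f)^c=\{s\in S:f(s)\neq0\}$ is an atom. Conversely, if $Z(f)^c$ is an atom and $f(s)$ is a right symmetric point of $X$ for each $s\in S$, then $f$ is a right symmetric point of $L^1(\mu,X)$.
   Context: $L^1(\mu,X)$ is the Lebesgue–Bochner space of (classes of a.e. equal) strongly measurable $f:S\to X$ with $\|f\|=\int_S\|f(s)\|\,d\mu(s)<\infty$; $Z(f)=\{s:f(s)=0\}$. In a real normed space $Y$, $x\perp_{BJ}y$ means $\|x+\lambda y\|\ge\|x\|$ for all $\lambda\in\mathbb{R}$; $x$ is a right symmetric point if $y\perp_{BJ}x$ implies $x\perp_{BJ}y$ for all $y\in Y$. The norm of $X$ is Fréchet differentiable if for every non-zero $x$ there is $\varphi\in X^*$ with $\lim_{h\to0}\big|\|x+h\|-\|x\|-\varphi(h)\big|/\|h\|=0$. A measurable set $A$ is an atom if $\mu(A)>0$ and every measurable $B\subseteq A$ has $\mu(B)=0$ or $\mu(B)=\mu(A)$. *)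

theory Defs
  imports "HOL-Analysis.Analysis"
begin

definition bj_orth :: "'a::real_normed_vector \<Rightarrow> 'a \<Rightarrow> bool" where
  "bj_orth x y \<longleftrightarrow> (\<forall>c::real. norm (x + c *\<^sub>R y) \<ge> norm x)"

definition right_symmetric :: "'a::real_normed_vector \<Rightarrow> bool" where
  "right_symmetric x \<longleftrightarrow> (\<forall>y. bj_orth y x \<longrightarrow> bj_orth x y)"

text \<open>(mu-)strong measurability: a.e. limit of a sequence of measurable simple functions.
  (Isabelle's integrable needs a second countable target, so we do not use it.)\<close>
definition strongly_measurable :: "'s measure \<Rightarrow> ('s \<Rightarrow> 'b::real_normed_vector) \<Rightarrow> bool" where
  "strongly_measurable M f \<longleftrightarrow>
     (\<exists>u. (\<forall>i. simple_function M (u i)) \<and> (AE s in M. (\<lambda>i. u i s) \<longlonglongrightarrow> f s))"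

definition L1_norm :: "'s measure \<Rightarrow> ('s \<Rightarrow> 'b::real_normed_vector) \<Rightarrow> ennreal" where
  "L1_norm M f = (\<integral>\<^sup>+ s. ennreal (norm (f s)) \<partial>M)"

definition in_L1 :: "'s measure \<Rightarrow> ('s \<Rightarrow> 'b::real_normed_vector) \<Rightarrow> bool" where
  "in_L1 M f \<longleftrightarrow> strongly_measurable M f \<and> L1_norm M f < \<infinity>"

text \<open>Birkhoff--James orthogonality in L1(M,X), on representatives
  (the L1 norm does not depend on the representative).\<close>
definition bj_orth_L1 :: "'s measure \<Rightarrow> ('s \<Rightarrow> 'b::real_normed_vector) \<Rightarrow> ('s \<Rightarrow> 'b) \<Rightarrow> bool" where
  "bj_orth_L1 M f g \<longleftrightarrow> (\<forall>c::real. L1_norm M (\<lambda>s. f s + c *\<^sub>R g s) \<ge> L1_norm M f)"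

definition right_symmetric_L1 :: "'s measure \<Rightarrow> ('s \<Rightarrow> 'b::real_normed_vector) \<Rightarrow> bool" where
  "right_symmetric_L1 M f \<longleftrightarrow>
     (\<forall>g. in_L1 M g \<longrightarrow> bj_orth_L1 M g f \<longrightarrow> bj_orth_L1 M f g)"

definition is_atom :: "'s measure \<Rightarrow> 's set \<Rightarrow> bool" where
  "is_atom M A \<longleftrightarrow> A \<in> sets M \<and> emeasure M A > 0 \<and>
     (\<forall>B\<in>sets M. B \<subseteq> A \<longrightarrow> emeasure M B = 0 \<or> emeasure M B = emeasure M A)"

end

theory Submission
  imports Defs
begin

text \<open>
  If the support of a right symmetric f splits into parts B and C of positive measure with
  \<open>\<integral>\<^sub>B \<parallel>f\<parallel> \<le> \<integral>\<^sub>C \<parallel>f\<parallel>\<close>, put \<open>g = 1\<^sub>B f\<close>. Then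
  \<open>\<parallel>g + c f\<parallel> = \<bar>1 + c\<bar> \<integral>\<^sub>B \<parallel>f\<parallel> + \<bar>c\<bar> \<integral>\<^sub>C \<parallel>f\<parallel> \<ge> \<parallel>g\<parallel>\<close>, so g is orthogonal to f; right symmetry
  makes f orthogonal to g, and \<open>c = -1\<close> gives \<open>\<integral>\<^sub>B \<parallel>f\<parallel> + \<integral>\<^sub>C \<parallel>f\<parallel> \<le> \<integral>\<^sub>C \<parallel>f\<parallel>\<close>, which is absurd as
  f does not vanish on B.
  Conversely, the support of an integrable function that is an atom has finite measure, and on a
  finite atom every strongly measurable function is a.e. constant. Orthogonality in L1 between f
  and any g then reduces to orthogonality in X between their constant values on the atom, where
  right symmetry of the values of f applies.
\<close>

lemma (in complete_measure) borel_measurable_AE_eq: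
  fixes h g :: "'a \<Rightarrow> 'b::topological_space"
  assumes "g \<in> borel_measurable M" "AE s in M. h s = g s"
  shows "h \<in> borel_measurable M"
proof (rule borel_measurableI)
  fix S :: "'b set" assume "open S"
  then have "g -` S \<inter> space M \<in> sets M"
    using assms(1) by (simp add: borel_measurable_vimage_open)
  then show "h -` S \<inter> space M \<in> sets M"
    by (rule in_sets_AE[rotated]) (use assms(2) in auto)
qed

lemma (in complete_measure) strongly_measurable_norm:
  assumes "strongly_measurable M g"
  shows "(\<lambda>s. norm (g s)) \<in> borel_measurable M"
proof -
  obtain u where u: "\<And>i. simple_function M (u i)" "AE s in M. (\<lambda>i. u i s) \<longlonglongrightarrow> g s"
    using assms unfolding strongly_measurable_def by blast
  have "(\<lambda>s. norm (u i s)) \<in> borel_measurable M" for i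
    by (rule borel_measurable_simple_function, rule simple_function_compose1, rule u(1))
  then have "(\<lambda>s. lim (\<lambda>i. norm (u i s))) \<in> borel_measurable M"
    by (rule borel_measurable_lim_metric)
  moreover have "AE s in M. norm (g s) = lim (\<lambda>i. norm (u i s))"
    using u(2) by eventually_elim (metis limI tendsto_norm)
  ultimately show ?thesis
    by (rule borel_measurable_AE_eq)
qed

lemma strongly_measurable_indicator_scaleR:
  assumes "D \<in> sets M" "strongly_measurable M f"
  shows "strongly_measurable M (\<lambda>s. indicator D s *\<^sub>R f s)"
proof -
  obtain u where u: "\<And>i. simple_function M (u i)" "AE s in M. (\<lambda>i. u i s) \<longlonglongrightarrow> f s"
    using assms(2) unfolding strongly_measurable_def by blast
  have simple: "simple_function M (\<lambda>s. indicator D s *\<^sub>R u i s)" for i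
    using simple_function_compose2[where h="\<lambda>x y. x *\<^sub>R y",
        OF simple_function_indicator[OF assms(1)] u(1)] by simp
  have "AE s in M. (\<lambda>i. indicator D s *\<^sub>R u i s) \<longlonglongrightarrow> indicator D s *\<^sub>R f s"
    using u(2) by eventually_elim (rule tendsto_scaleR[OF tendsto_const])
  with simple show ?thesis
    unfolding strongly_measurable_def by (intro exI[where x="\<lambda>i s. indicator D s *\<^sub>R u i s"]) simp
qed

lemma AE_on_non_null_set_imp_ex:
  assumes "A \<in> sets M" "emeasure M A \<noteq> 0" "AE s in M. s \<in> A \<longrightarrow> P s"
  shows "\<exists>s\<in>A. P s"
proof (rule ccontr)
  assume "\<not> (\<exists>s\<in>A. P s)"
  with assms(3) have "AE s in M. s \<notin> A"
    by auto
  with assms(1,2) show False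
    using AE_iff_null_sets[OF assms(1)] by auto
qed

text \<open>
  Finiteness of the atom is needed: if every non-empty subset of \<open>{1, 2}\<close> has measure \<open>\<infinity>\<close>,
  then \<open>{1, 2}\<close> is an atom on which the indicator of \<open>{1}\<close> is not a.e. constant.
\<close>

lemma simple_function_AE_const_on_atom:
  assumes "is_atom M A" "emeasure M A < \<infinity>" "simple_function M u"
  shows "\<exists>x. AE s in M. s \<in> A \<longrightarrow> u s = x"
proof -
  have A: "A \<in> sets M" "emeasure M A \<noteq> 0"
    using assms(1) unfolding is_atom_def by auto
  have A_space: "A \<subseteq> space M"
    using sets.sets_into_space[OF A(1)] .
  define P where "P x = u -` {x} \<inter> space M \<inter> A" for x
  have P: "P x \<in> sets M" for x
    unfolding P_def using simple_functionD(2)[OF assms(3)] A(1) by blast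
  have "A = (\<Union>x\<in>u ` A. P x)"
    using A_space unfolding P_def by auto
  moreover have "finite (u ` A)"
    using simple_functionD(1)[OF assms(3)] A_space by (meson finite_subset image_mono)
  ultimately have "(\<Union>x\<in>u ` A. P x) \<notin> null_sets M"
    using A by auto
  then obtain x where "P x \<notin> null_sets M"
    using \<open>finite (u ` A)\<close> P by blast
  then have "emeasure M (P x) = emeasure M A"
    using assms(1) P unfolding is_atom_def P_def by (auto simp: null_sets_def)
  then have "A - P x \<in> null_sets M"
    using emeasure_Diff[of M "P x" A] assms(2) A(1) P by (auto simp: P_def)
  then have "AE s in M. s \<in> A \<longrightarrow> u s = x"
    by (rule AE_not_in[THEN AE_mp]) (auto simp: P_def)
  then show ?thesis ..
qed

lemma strongly_measurable_AE_const_on_atom: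
  assumes "is_atom M A" "emeasure M A < \<infinity>" "strongly_measurable M g"
  shows "\<exists>s0\<in>A. AE s in M. s \<in> A \<longrightarrow> g s = g s0"
proof -
  have A: "A \<in> sets M" "emeasure M A \<noteq> 0"
    using assms(1) unfolding is_atom_def by auto
  obtain u where u: "\<And>i. simple_function M (u i)" "AE s in M. (\<lambda>i. u i s) \<longlonglongrightarrow> g s"
    using assms(3) unfolding strongly_measurable_def by blast
  have "\<forall>i. \<exists>x. AE s in M. s \<in> A \<longrightarrow> u i s = x"
    using simple_function_AE_const_on_atom[OF assms(1,2) u(1)] by blast
  then obtain c where "\<And>i. AE s in M. s \<in> A \<longrightarrow> u i s = c i"
    by metis
  then have "AE s in M. \<forall>i. s \<in> A \<longrightarrow> u i s = c i"
    unfolding AE_all_countable by blast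
  with u(2) have lim: "AE s in M. s \<in> A \<longrightarrow> c \<longlonglongrightarrow> g s"
  proof eventually_elim
    case (elim s)
    show ?case
    proof
      assume "s \<in> A"
      with elim(2) have "(\<lambda>i. u i s) = c"
        by auto
      with elim(1) show "c \<longlonglongrightarrow> g s"
        by simp
    qed
  qed
  obtain s0 where s0: "s0 \<in> A" "c \<longlonglongrightarrow> g s0"
    using AE_on_non_null_set_imp_ex[OF A lim] by blast
  from lim have "AE s in M. s \<in> A \<longrightarrow> g s = g s0"
    by eventually_elim (use s0(2) LIMSEQ_unique in blast)
  with s0(1) show ?thesis
    by blast
qed

lemma emeasure_atom_finite:
  assumes "is_atom M A" "h \<in> borel_measurable M" "(\<integral>\<^sup>+ s. ennreal (h s) \<partial>M) < \<infinity>"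
    and "\<And>s. s \<in> A \<Longrightarrow> 0 < h s"
  shows "emeasure M A < \<infinity>"
proof (rule ccontr)
  assume "\<not> emeasure M A < \<infinity>"
  then have A_infinite: "emeasure M A = \<infinity>"
    unfolding infinity_ennreal_def by (simp add: less_top[symmetric])
  have A[measurable]: "A \<in> sets M" and "emeasure M A \<noteq> 0"
    using assms(1) unfolding is_atom_def by auto
  note assms(2)[measurable]
  define E where "E n = A \<inter> {s \<in> space M. 1 / real (Suc n) < h s}" for n
  have E: "E n \<in> sets M" for n
    unfolding E_def by measurable
  have "E n \<in> null_sets M" for n
  proof -
    have "ennreal (1 / real (Suc n)) * emeasure M (E n)
        = (\<integral>\<^sup>+ s. ennreal (1 / real (Suc n)) * indicator (E n) s \<partial>M)"
      using E by (simp add: nn_integral_cmult_indicator)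
    also have "\<dots> \<le> (\<integral>\<^sup>+ s. ennreal (h s) \<partial>M)"
      by (intro nn_integral_mono) (auto simp: E_def indicator_def intro!: ennreal_leI)
    finally have "emeasure M (E n) \<noteq> \<infinity>"
      using assms(3) by (auto simp: ennreal_mult_eq_top_iff)
    moreover have "E n \<subseteq> A"
      unfolding E_def by blast
    ultimately show ?thesis
      using assms(1) E A_infinite unfolding is_atom_def by (auto simp: null_sets_def)
  qed
  moreover have "A \<subseteq> (\<Union>n. E n)"
  proof
    fix s assume "s \<in> A"
    with assms(4) obtain n where "1 / real (Suc n) < h s"
      using nat_approx_posE by blast
    with \<open>s \<in> A\<close> sets.sets_into_space[OF A] show "s \<in> (\<Union>n. E n)"
      unfolding E_def by blast
  qed
  ultimately have "A \<in> null_sets M"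
    using A null_sets_subset[of "\<Union>n. E n" M A] by blast
  with \<open>emeasure M A \<noteq> 0\<close> show False
    by auto
qed

lemma ennreal_mult_add_le_cancel:
  assumes "m \<noteq> 0" "m \<noteq> \<infinity>" "R \<noteq> \<infinity>" "0 \<le> y"
    and "ennreal x * m + R \<le> ennreal y * m + R"
  shows "x \<le> y"
proof -
  have "R + m * ennreal x \<le> R + m * ennreal y"
    using assms(5) by (simp only: add.commute mult.commute)
  then have "m * ennreal x \<le> m * ennreal y"
    using assms(3) unfolding ennreal_add_left_cancel_le by blast
  moreover have "m \<noteq> top"
    using assms(2) by simp
  ultimately have "ennreal x \<le> ennreal y"
    using ennreal_mult_le_mult_iff[OF assms(1)] by blast
  then show ?thesis
    using assms(4) by (simp add: ennreal_le_iff)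
qed

lemma null_set_if_nn_integral_norm_indicator_zero:
  assumes [measurable]: "D \<in> sets M" "(\<lambda>s. norm (f s)) \<in> borel_measurable M"
    and "\<And>s. s \<in> D \<Longrightarrow> f s \<noteq> 0"
    and "(\<integral>\<^sup>+ s. ennreal (norm (f s)) * indicator D s \<partial>M) = 0"
  shows "D \<in> null_sets M"
proof -
  have "AE s in M. ennreal (norm (f s)) * indicator D s = 0"
    using assms(4) by (subst (asm) nn_integral_0_iff_AE) simp_all
  then have "AE s in M. s \<notin> D"
    by eventually_elim (use assms(3) in \<open>auto simp: indicator_def\<close>)
  then show ?thesis
    using AE_iff_null_sets[OF assms(1)] by blast
qed

lemma L1_norm_AE_const_on_set:
  assumes A[measurable]: "A \<in> sets M" and "AE s in M. s \<in> A \<longrightarrow> h s = z"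
    and "\<And>s. s \<in> space M - A \<Longrightarrow> h s = k s"
    and [measurable]: "(\<lambda>s. norm (k s)) \<in> borel_measurable M"
  shows "L1_norm M h = ennreal (norm z) * emeasure M A
    + (\<integral>\<^sup>+ s. ennreal (norm (k s)) * indicator (space M - A) s \<partial>M)"
proof -
  have "L1_norm M h = (\<integral>\<^sup>+ s. ennreal (norm z) * indicator A s
      + ennreal (norm (k s)) * indicator (space M - A) s \<partial>M)"
    unfolding L1_norm_def
  proof (rule nn_integral_cong_AE)
    from assms(2) AE_space show "AE s in M. ennreal (norm (h s)) =
        ennreal (norm z) * indicator A s + ennreal (norm (k s)) * indicator (space M - A) s"
      by eventually_elim (use assms(3) in \<open>auto simp: indicator_def\<close>)
  qed
  also have "\<dots> = (\<integral>\<^sup>+ s. ennreal (norm z) * indicator A s \<partial>M)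
      + (\<integral>\<^sup>+ s. ennreal (norm (k s)) * indicator (space M - A) s \<partial>M)"
    by (rule nn_integral_add) measurable
  finally show ?thesis
    by (simp add: nn_integral_cmult_indicator)
qed

lemma L1_norm_indicators_scaleR:
  fixes f :: "'s \<Rightarrow> 'b::real_normed_vector"
  assumes [measurable]: "D \<in> sets M" "E \<in> sets M" "(\<lambda>s. norm (f s)) \<in> borel_measurable M"
    and "D \<inter> E = {}"
    and "\<And>s. s \<in> space M \<Longrightarrow> h s = (\<alpha> * indicator D s + \<beta> * indicator E s) *\<^sub>R f s"
  shows "L1_norm M h = ennreal \<bar>\<alpha>\<bar> * (\<integral>\<^sup>+ s. ennreal (norm (f s)) * indicator D s \<partial>M)
    + ennreal \<bar>\<beta>\<bar> * (\<integral>\<^sup>+ s. ennreal (norm (f s)) * indicator E s \<partial>M)"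
proof -
  have "L1_norm M h = (\<integral>\<^sup>+ s. ennreal \<bar>\<alpha>\<bar> * (ennreal (norm (f s)) * indicator D s)
      + ennreal \<bar>\<beta>\<bar> * (ennreal (norm (f s)) * indicator E s) \<partial>M)"
    unfolding L1_norm_def
    by (intro nn_integral_cong) (use assms(4,5) in \<open>auto simp: indicator_def ennreal_mult\<close>)
  also have "\<dots> = ennreal \<bar>\<alpha>\<bar> * (\<integral>\<^sup>+ s. ennreal (norm (f s)) * indicator D s \<partial>M)
      + ennreal \<bar>\<beta>\<bar> * (\<integral>\<^sup>+ s. ennreal (norm (f s)) * indicator E s \<partial>M)"
    by (simp add: nn_integral_add nn_integral_cmult)
  finally show ?thesis .
qed

lemma bj_orth_L1_indicator_lighter_part:
  fixes f :: "'s \<Rightarrow> 'b::real_normed_vector"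
  assumes [measurable]: "D \<in> sets M" "E \<in> sets M" "(\<lambda>s. norm (f s)) \<in> borel_measurable M"
    and "D \<inter> E = {}" "\<And>s. s \<in> space M \<Longrightarrow> f s \<noteq> 0 \<Longrightarrow> s \<in> D \<union> E"
    and "(\<integral>\<^sup>+ s. ennreal (norm (f s)) * indicator D s \<partial>M)
      \<le> (\<integral>\<^sup>+ s. ennreal (norm (f s)) * indicator E s \<partial>M)"
  shows "bj_orth_L1 M (\<lambda>s. indicator D s *\<^sub>R f s) f"
  unfolding bj_orth_L1_def
proof
  fix c :: real
  define a where "a = (\<integral>\<^sup>+ s. ennreal (norm (f s)) * indicator D s \<partial>M)"
  define b where "b = (\<integral>\<^sup>+ s. ennreal (norm (f s)) * indicator E s \<partial>M)"
  have "L1_norm M (\<lambda>s. indicator D s *\<^sub>R f s) = ennreal \<bar>1\<bar> * a + ennreal \<bar>0\<bar> * b"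
    unfolding a_def b_def by (rule L1_norm_indicators_scaleR[OF assms(1-4)]) simp
  then have "L1_norm M (\<lambda>s. indicator D s *\<^sub>R f s) = a"
    by simp
  moreover have "a \<le> ennreal \<bar>1 + c\<bar> * a + ennreal \<bar>c\<bar> * a"
  proof -
    have "a = ennreal 1 * a"
      by simp
    also have "\<dots> \<le> ennreal (\<bar>1 + c\<bar> + \<bar>c\<bar>) * a"
      by (intro mult_right_mono ennreal_leI) auto
    also have "\<dots> = ennreal \<bar>1 + c\<bar> * a + ennreal \<bar>c\<bar> * a"
      by (subst ennreal_plus) (auto simp: distrib_right)
    finally show ?thesis .
  qed
  moreover have "ennreal \<bar>c\<bar> * a \<le> ennreal \<bar>c\<bar> * b"
    using assms(6) unfolding a_def b_def by (rule mult_left_mono) simp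
  moreover have "L1_norm M (\<lambda>s. indicator D s *\<^sub>R f s + c *\<^sub>R f s)
      = ennreal \<bar>1 + c\<bar> * a + ennreal \<bar>c\<bar> * b"
    unfolding a_def b_def
    by (rule L1_norm_indicators_scaleR[OF assms(1-4)])
      (use assms(4,5) in \<open>force simp: indicator_def scaleR_add_left\<close>)
  ultimately show "L1_norm M (\<lambda>s. indicator D s *\<^sub>R f s)
      \<le> L1_norm M (\<lambda>s. indicator D s *\<^sub>R f s + c *\<^sub>R f s)"
    by (metis add_left_mono order_trans)
qed

lemma right_symmetric_L1_lighter_part_null:
  fixes f :: "'s \<Rightarrow> 'b::real_normed_vector"
  assumes "complete_measure M" "in_L1 M f" "right_symmetric_L1 M f"
    and [measurable]: "D \<in> sets M" "E \<in> sets M"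
    and "D \<inter> E = {}" "D \<union> E = {s \<in> space M. f s \<noteq> 0}"
    and "(\<integral>\<^sup>+ s. ennreal (norm (f s)) * indicator D s \<partial>M)
      \<le> (\<integral>\<^sup>+ s. ennreal (norm (f s)) * indicator E s \<partial>M)"
  shows "D \<in> null_sets M"
proof -
  have norm_f[measurable]: "(\<lambda>s. norm (f s)) \<in> borel_measurable M"
    using complete_measure.strongly_measurable_norm[OF assms(1)] assms(2)
    unfolding in_L1_def by blast
  have support: "\<And>s. s \<in> space M \<Longrightarrow> f s \<noteq> 0 \<Longrightarrow> s \<in> D \<union> E"
    using assms(7) by blast
  define a where "a = (\<integral>\<^sup>+ s. ennreal (norm (f s)) * indicator D s \<partial>M)"
  define b where "b = (\<integral>\<^sup>+ s. ennreal (norm (f s)) * indicator E s \<partial>M)"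
  define g where "g s = indicator D s *\<^sub>R f s" for s
  have "L1_norm M f = ennreal \<bar>1\<bar> * a + ennreal \<bar>1\<bar> * b"
    unfolding a_def b_def
    by (rule L1_norm_indicators_scaleR[OF assms(4,5) norm_f assms(6)])
      (use assms(6) support in \<open>force simp: indicator_def\<close>)
  then have L1_norm_f: "L1_norm M f = a + b"
    by simp
  then have "a \<noteq> \<infinity>" "b \<noteq> \<infinity>"
    using assms(2) unfolding in_L1_def by (auto simp: ennreal_add_eq_top)
  have "L1_norm M g = ennreal \<bar>1\<bar> * a + ennreal \<bar>0\<bar> * b"
    unfolding a_def b_def g_def
    by (rule L1_norm_indicators_scaleR[OF assms(4,5) norm_f assms(6)]) simp
  moreover have "strongly_measurable M g"
    using strongly_measurable_indicator_scaleR[OF assms(4)] assms(2)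
    unfolding in_L1_def g_def by blast
  ultimately have "in_L1 M g"
    using \<open>a \<noteq> \<infinity>\<close> unfolding in_L1_def by (simp add: less_top[symmetric])
  moreover have "bj_orth_L1 M g f"
    unfolding g_def
    by (rule bj_orth_L1_indicator_lighter_part[OF assms(4,5) norm_f assms(6) support assms(8)])
  ultimately have "bj_orth_L1 M f g"
    using assms(3) unfolding right_symmetric_L1_def by blast
  then have "L1_norm M f \<le> L1_norm M (\<lambda>s. f s + (-1) *\<^sub>R g s)"
    unfolding bj_orth_L1_def by blast
  also have "\<dots> = ennreal \<bar>0\<bar> * a + ennreal \<bar>1\<bar> * b"
    unfolding a_def b_def
    by (rule L1_norm_indicators_scaleR[OF assms(4,5) norm_f assms(6)])
      (use assms(6) support in \<open>force simp: g_def indicator_def\<close>)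
  finally have "b + a \<le> b + 0"
    using L1_norm_f by (simp add: add.commute)
  then have "a = 0"
    using \<open>b \<noteq> \<infinity>\<close> ennreal_add_left_cancel_le by auto
  then show ?thesis
    using null_set_if_nn_integral_norm_indicator_zero[OF assms(4) norm_f] assms(7)
    unfolding a_def by blast
qed

lemma is_atom_support_if_right_symmetric_L1:
  fixes f :: "'s \<Rightarrow> 'b::real_normed_vector"
  assumes "complete_measure M" "in_L1 M f" "\<not> (AE s in M. f s = 0)" "right_symmetric_L1 M f"
  shows "is_atom M {s \<in> space M. f s \<noteq> 0}"
proof -
  define A where "A = {s \<in> space M. f s \<noteq> 0}"
  have [measurable]: "(\<lambda>s. norm (f s)) \<in> borel_measurable M"
    using complete_measure.strongly_measurable_norm[OF assms(1)] assms(2)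
    unfolding in_L1_def by blast
  have "{s \<in> space M. norm (f s) \<noteq> 0} \<in> sets M"
    by measurable
  then have A[measurable]: "A \<in> sets M"
    unfolding A_def by simp
  have "A \<notin> null_sets M"
  proof
    assume "A \<in> null_sets M"
    from AE_not_in[OF this] AE_space have "AE s in M. f s = 0"
      by eventually_elim (auto simp: A_def)
    with assms(3) show False ..
  qed
  then have "emeasure M A > 0"
    by (auto simp: null_sets_def zero_less_iff_neq_zero)
  moreover have "emeasure M B = 0 \<or> emeasure M B = emeasure M A"
    if [measurable]: "B \<in> sets M" "B \<subseteq> A" for B
  proof -
    have disjoint: "B \<inter> (A - B) = {}" "(A - B) \<inter> B = {}"
      and union: "B \<union> (A - B) = {s \<in> space M. f s \<noteq> 0}" "(A - B) \<union> B = {s \<in> space M. f s \<noteq> 0}"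
      using that(2) unfolding A_def by auto
    have "B \<in> null_sets M \<or> A - B \<in> null_sets M"
    proof (rule le_cases[of "\<integral>\<^sup>+ s. ennreal (norm (f s)) * indicator B s \<partial>M"
          "\<integral>\<^sup>+ s. ennreal (norm (f s)) * indicator (A - B) s \<partial>M"])
      assume "(\<integral>\<^sup>+ s. ennreal (norm (f s)) * indicator B s \<partial>M)
        \<le> (\<integral>\<^sup>+ s. ennreal (norm (f s)) * indicator (A - B) s \<partial>M)"
      from right_symmetric_L1_lighter_part_null[OF assms(1,2,4) _ _ disjoint(1) union(1) this]
      show ?thesis
        by simp
    next
      assume "(\<integral>\<^sup>+ s. ennreal (norm (f s)) * indicator (A - B) s \<partial>M)
        \<le> (\<integral>\<^sup>+ s. ennreal (norm (f s)) * indicator B s \<partial>M)"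
      from right_symmetric_L1_lighter_part_null[OF assms(1,2,4) _ _ disjoint(2) union(2) this]
      show ?thesis
        by simp
    qed
    moreover have "emeasure M B + emeasure M (A - B) = emeasure M A"
      using plus_emeasure[of B M "A - B"] that(2) by (simp add: Un_absorb1)
    ultimately show ?thesis
      by auto
  qed
  ultimately show ?thesis
    using A unfolding is_atom_def A_def by blast
qed

lemma bj_orth_of_bj_orth_L1_const_on_set:
  assumes A[measurable]: "A \<in> sets M" "emeasure M A \<noteq> 0" "emeasure M A \<noteq> \<infinity>"
    and norm_g[measurable]: "(\<lambda>s. norm (g s)) \<in> borel_measurable M" and "L1_norm M g \<noteq> \<infinity>"
    and f_const: "AE s in M. s \<in> A \<longrightarrow> f s = x"
    and g_const: "AE s in M. s \<in> A \<longrightarrow> g s = y"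
    and "\<And>s. s \<in> space M - A \<Longrightarrow> f s = 0"
    and "bj_orth_L1 M g f"
  shows "bj_orth y x"
proof -
  define R where "R = (\<integral>\<^sup>+ s. ennreal (norm (g s)) * indicator (space M - A) s \<partial>M)"
  have L1_norm_g_plus_f:
      "L1_norm M (\<lambda>s. g s + c *\<^sub>R f s) = ennreal (norm (y + c *\<^sub>R x)) * emeasure M A + R"
    for c
  proof (rule L1_norm_AE_const_on_set[OF A(1) _ _ norm_g, folded R_def])
    show "AE s in M. s \<in> A \<longrightarrow> g s + c *\<^sub>R f s = y + c *\<^sub>R x"
      using f_const g_const by eventually_elim simp
  qed (simp add: assms(8))
  have L1_norm_g: "L1_norm M g = ennreal (norm y) * emeasure M A + R"
    using L1_norm_g_plus_f[of 0] by simp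
  then have "R \<noteq> \<infinity>"
    using assms(5) by auto
  have "norm y \<le> norm (y + c *\<^sub>R x)" for c
  proof -
    have "L1_norm M g \<le> L1_norm M (\<lambda>s. g s + c *\<^sub>R f s)"
      using assms(9) unfolding bj_orth_L1_def by blast
    then have "ennreal (norm y) * emeasure M A + R
        \<le> ennreal (norm (y + c *\<^sub>R x)) * emeasure M A + R"
      unfolding L1_norm_g L1_norm_g_plus_f .
    then show ?thesis
      by (rule ennreal_mult_add_le_cancel[OF A(2,3) \<open>R \<noteq> \<infinity>\<close> norm_ge_zero])
  qed
  then show ?thesis
    unfolding bj_orth_def by blast
qed

lemma bj_orth_L1_of_bj_orth_const_on_set:
  assumes A[measurable]: "A \<in> sets M"
    and [measurable]: "(\<lambda>s. norm (g s)) \<in> borel_measurable M"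
    and f_const: "AE s in M. s \<in> A \<longrightarrow> f s = x"
    and g_const: "AE s in M. s \<in> A \<longrightarrow> g s = y"
    and "\<And>s. s \<in> space M - A \<Longrightarrow> f s = 0"
    and "bj_orth x y"
  shows "bj_orth_L1 M f g"
  unfolding bj_orth_L1_def
proof
  fix c :: real
  have "L1_norm M f = ennreal (norm x) * emeasure M A"
    using L1_norm_AE_const_on_set[OF A f_const, of "\<lambda>_. 0"] assms(5) by simp
  also have "\<dots> \<le> ennreal (norm (x + c *\<^sub>R y)) * emeasure M A"
    using assms(6) unfolding bj_orth_def by (intro mult_right_mono ennreal_leI) auto
  also have "\<dots> \<le> ennreal (norm (x + c *\<^sub>R y)) * emeasure M A
      + (\<integral>\<^sup>+ s. ennreal (norm (c *\<^sub>R g s)) * indicator (space M - A) s \<partial>M)"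
    by simp
  also have "\<dots> = L1_norm M (\<lambda>s. f s + c *\<^sub>R g s)"
  proof (rule L1_norm_AE_const_on_set[OF A, symmetric])
    show "AE s in M. s \<in> A \<longrightarrow> f s + c *\<^sub>R g s = x + c *\<^sub>R y"
      using f_const g_const by eventually_elim simp
  qed (simp_all add: assms(5))
  finally show "L1_norm M f \<le> L1_norm M (\<lambda>s. f s + c *\<^sub>R g s)" .
qed

lemma right_symmetric_L1_if_support_atom:
  fixes f :: "'s \<Rightarrow> 'b::real_normed_vector"
  assumes "complete_measure M" "in_L1 M f" "is_atom M {s \<in> space M. f s \<noteq> 0}"
    and "\<forall>s\<in>space M. right_symmetric (f s)"
  shows "right_symmetric_L1 M f"
  unfolding right_symmetric_L1_def
proof (intro allI impI)
  fix g assume "in_L1 M g" "bj_orth_L1 M g f"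
  define A where "A = {s \<in> space M. f s \<noteq> 0}"
  have atom: "is_atom M A" and off_A: "\<And>s. s \<in> space M - A \<Longrightarrow> f s = 0"
    using assms(3) unfolding A_def by auto
  then have A: "A \<in> sets M" "emeasure M A \<noteq> 0"
    unfolding is_atom_def by auto
  have norm_f: "(\<lambda>s. norm (f s)) \<in> borel_measurable M"
    and norm_g: "(\<lambda>s. norm (g s)) \<in> borel_measurable M"
    using complete_measure.strongly_measurable_norm[OF assms(1)] assms(2) \<open>in_L1 M g\<close>
    unfolding in_L1_def by blast+
  have "emeasure M A < \<infinity>"
    using emeasure_atom_finite[OF atom norm_f] assms(2)
    unfolding in_L1_def L1_norm_def A_def by simp
  obtain s0 where "s0 \<in> A" and f_const: "AE s in M. s \<in> A \<longrightarrow> f s = f s0"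
    using strongly_measurable_AE_const_on_atom[OF atom \<open>emeasure M A < \<infinity>\<close>] assms(2)
    unfolding in_L1_def by blast
  obtain t0 where g_const: "AE s in M. s \<in> A \<longrightarrow> g s = g t0"
    using strongly_measurable_AE_const_on_atom[OF atom \<open>emeasure M A < \<infinity>\<close>] \<open>in_L1 M g\<close>
    unfolding in_L1_def by blast
  have "bj_orth (g t0) (f s0)"
    using \<open>emeasure M A < \<infinity>\<close> \<open>in_L1 M g\<close> unfolding in_L1_def
    by (intro bj_orth_of_bj_orth_L1_const_on_set[OF A _ norm_g _ f_const g_const off_A
          \<open>bj_orth_L1 M g f\<close>]) auto
  then have "bj_orth (f s0) (g t0)"
    using assms(4) \<open>s0 \<in> A\<close> unfolding right_symmetric_def A_def by blast
  then show "bj_orth_L1 M f g"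
    using bj_orth_L1_of_bj_orth_const_on_set[OF A(1) norm_g f_const g_const off_A] by blast
qed

theorem theorem3p10:
  fixes M :: "'s measure" and f :: "'s \<Rightarrow> 'b::banach"
  assumes "complete_measure M"
    and "\<forall>x::'b. x \<noteq> 0 \<longrightarrow> norm differentiable (at x)"
    and "in_L1 M f"
    and "\<not> (AE s in M. f s = 0)"
  shows "(right_symmetric_L1 M f \<longrightarrow> is_atom M {s \<in> space M. f s \<noteq> 0})
    \<and> ((is_atom M {s \<in> space M. f s \<noteq> 0} \<and> (\<forall>s\<in>space M. right_symmetric (f s)))
         \<longrightarrow> right_symmetric_L1 M f)"
  \<comment> \<open>Neither direction uses the differentiability of the norm, nor completeness of X.\<close>
  using is_atom_support_if_right_symmetric_L1[OF assms(1,3,4)]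
    right_symmetric_L1_if_support_atom[OF assms(1,3)]
  by blast

end
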